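(* Let $M'$ be a $4m$-dimensional quaternionic space form of constant quaternionic sectional curvature $4c$ endowed with a Ricci quarter-symmetric metric connection (setting as in the context), and let $N'$ be an $n$-dimensional submanifold. Then for each $p\in N'$ and each unit vector $X\in T_pN'$, taking an orthonormal basis $\{e_1=X,e_2,\dots,e_n\}$ of $T_pN'$, the Ricci curvature $\mathrm{Ric}(X)=\sum_{j=2}^n g(R(e_1,e_j)e_j,e_1)$ satisfies $$\mathrm{Ric}(X)\le c\Big\{(n-1)+3\sum_{k=1}^{3}\sum_{j=2}^{n}g^2(\psi_kX,e_j)\Big\}-c\Big\{(n-1)+3\sum_{k=1}^{3}\frac{\|P_k\|^2}{n}\Big\}\big[\operatorname{tr}M+(n-2)M(X,X)\big]+\frac{n^2\|H\|^2}{4}.$$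
   Context: Let $(M',g)$ be a $4m$-dimensional quaternionic Kaehler manifold with local almost Hermitian structures $\psi_1,\psi_2,\psi_3$ ($\psi_i^2=-I$, $\psi_1\psi_2=\psi_3=-\psi_2\psi_1$ and cyclically) which is a quaternionic space form of constant quaternionic sectional curvature $4c$, i.e. its Levi-Civita connection $\nabla^*$ has curvature $R^*(X,Y)Z=c\{g(Y,Z)X-g(X,Z)Y+\sum_{i=1}^3(g(\psi_iY,Z)\psi_iX-g(\psi_iX,Z)\psi_iY-2g(\psi_iX,Y)\psi_iZ)\}$. $M'$ carries the Ricci quarter-symmetric metric connection $\nabla''_XY=\nabla^*_XY+\eta(Y)LX-S(X,Y)P$, where $S$ is the Ricci tensor of $\nabla^*$, $L$ is the $(1,1)$-tensor with $g(LX,Y)=S(X,Y)$, $\eta$ is a 1-form and $P$ the unit vector field with $g(P,X)=\eta(X)$. Put $QX=\nabla^*_XP-\eta(LX)P+\tfrac12\eta(P)LX$ and $M(X,Y)=g(QX,Y)$. $N'$ is an $n$-dimensional submanifold with induced connection $\nabla$ (curvature $R$) and second fundamental form $h$; $\{e_1,\dots,e_n\}$ and $\{e_{n+1},\dots,e_{4m}\}$ are orthonormal bases of $T_pN'$ and $T_p^\perp N'$. Write $\psi_kX=P_kX+F_kX$ (tangential and normal parts), $\|P_k\|^2=\sum_{i,j=1}^n g(P_ke_i,e_j)^2$, and $\operatorname{tr}M=\sum_{i=1}^n M(e_i,e_i)$ (denoted $m$ in the paper). Following the paper's standing assumption $S=(\tau'/n)g$, the curvature of $\nabla''$ is $R''(X,Y)Z=R^*(X,Y)Z-\frac{\tau'}{n}\{M(Y,Z)X-M(X,Z)Y+g(Y,Z)QX-g(X,Z)QY\}$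 with $\tau'=c\{n(n-1)+3\sum_{k=1}^3\|P_k\|^2\}$, and the Gauss equation $g(R''(X,Y)Z,W)=g(R(X,Y)Z,W)+g(h(X,Z),h(Y,W))-g(h(X,W),h(Y,Z))$ holds for tangent $X,Y,Z,W$. The mean curvature vector is $H=\frac1n\sum_{i=1}^n h(e_i,e_i)$. *)

theory Defs
  imports "HOL-Analysis.Analysis"
begin

text \<open>Pointwise model: the tangent space T_pM' is a euclidean space 'v of dimension 4m,
T_pN' is a subspace T with orthonormal basis e 0, ..., e (n-1)
(the paper's e_1,...,e_n). psi k for k = 1,2,3 are the almost Hermitian structures at p.\<close>

definition Rstar :: "real \<Rightarrow> (nat \<Rightarrow> 'v::euclidean_space \<Rightarrow> 'v) \<Rightarrow> 'v \<Rightarrow> 'v \<Rightarrow> 'v \<Rightarrow> 'v" where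
  "Rstar c \<psi> X Y Z = c *\<^sub>R ((Y \<bullet> Z) *\<^sub>R X - (X \<bullet> Z) *\<^sub>R Y
     + (\<Sum>i\<in>{1,2,3}. ((\<psi> i Y \<bullet> Z) *\<^sub>R \<psi> i X - (\<psi> i X \<bullet> Z) *\<^sub>R \<psi> i Y
                         - (2 * (\<psi> i X \<bullet> Y)) *\<^sub>R \<psi> i Z)))"

definition tang :: "(nat \<Rightarrow> 'v::euclidean_space) \<Rightarrow> nat \<Rightarrow> 'v \<Rightarrow> 'v" where
  "tang e n v = (\<Sum>i<n. (v \<bullet> e i) *\<^sub>R e i)"

text \<open>\<parallel>P_k\<parallel>^2 = sum_{i,j} g(P_k e_i, e_j)^2, where P_k X is the tangential part of psi_k X.\<close>
definition normP2 :: "(nat \<Rightarrow> 'v::euclidean_space \<Rightarrow> 'v) \<Rightarrow> (nat \<Rightarrow> 'v) \<Rightarrow> nat \<Rightarrow> nat \<Rightarrow> real" where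
  "normP2 \<psi> e n k = (\<Sum>i<n. \<Sum>j<n. (tang e n (\<psi> k (e i)) \<bullet> e j)\<^sup>2)"

definition tau' :: "real \<Rightarrow> (nat \<Rightarrow> 'v::euclidean_space \<Rightarrow> 'v) \<Rightarrow> (nat \<Rightarrow> 'v) \<Rightarrow> nat \<Rightarrow> real" where
  "tau' c \<psi> e n = c * (real n * (real n - 1) + 3 * (\<Sum>k\<in>{1,2,3}. normP2 \<psi> e n k))"

definition Mform :: "('v::euclidean_space \<Rightarrow> 'v) \<Rightarrow> 'v \<Rightarrow> 'v \<Rightarrow> real" where
  "Mform Q X Y = Q X \<bullet> Y"

text \<open>Curvature of the Ricci quarter-symmetric metric connection (under S = (tau'/n) g).\<close>
definition Rpp :: "real \<Rightarrow> (nat \<Rightarrow> 'v::euclidean_space \<Rightarrow> 'v) \<Rightarrow> ('v \<Rightarrow> 'v) \<Rightarrow> (nat \<Rightarrow> 'v) \<Rightarrow> nat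
     \<Rightarrow> 'v \<Rightarrow> 'v \<Rightarrow> 'v \<Rightarrow> 'v" where
  "Rpp c \<psi> Q e n X Y Z = Rstar c \<psi> X Y Z
     - (tau' c \<psi> e n / real n) *\<^sub>R (Mform Q Y Z *\<^sub>R X - Mform Q X Z *\<^sub>R Y
                                    + (Y \<bullet> Z) *\<^sub>R Q X - (X \<bullet> Z) *\<^sub>R Q Y)"

definition trM :: "('v::euclidean_space \<Rightarrow> 'v) \<Rightarrow> (nat \<Rightarrow> 'v) \<Rightarrow> nat \<Rightarrow> real" where
  "trM Q e n = (\<Sum>i<n. Mform Q (e i) (e i))"

definition meancurv :: "('v::euclidean_space \<Rightarrow> 'v \<Rightarrow> 'v) \<Rightarrow> (nat \<Rightarrow> 'v) \<Rightarrow> nat \<Rightarrow> 'v" where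
  "meancurv h e n = (1 / real n) *\<^sub>R (\<Sum>i<n. h (e i) (e i))"

text \<open>Ric(X) with X = e 0 (the paper's e_1): sum over j = 2..n, i.e. indices 1..n-1.\<close>
definition Ric :: "('v::euclidean_space \<Rightarrow> 'v \<Rightarrow> 'v \<Rightarrow> 'v) \<Rightarrow> (nat \<Rightarrow> 'v) \<Rightarrow> nat \<Rightarrow> real" where
  "Ric R e n = (\<Sum>j\<in>{1..<n}. R (e 0) (e j) (e j) \<bullet> e 0)"

end

theory Submission
  imports Defs
begin

text \<open>By the Gauss equation, each sectional curvature K(e_1, e_j) of the submanifold is the
corresponding curvature of the Ricci quarter-symmetric connection plus the normal term
g(h_11, h_jj) - |h_1j|^2. For orthonormal X, Y the ambient curvature of the quaternionic space
form is c (1 + 3 \<Sum>_k g(\<psi>_k X, Y)^2), and the connection corrects it by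
-(\<tau>'/n)(M(X,X) + M(Y,Y)); summing over j gives the first two terms of the bound. The normal
terms sum to at most g(h_11, \<Sum>_{j\<ge>2} h_jj), and 4 g(a, b) \<le> |a + b|^2 bounds this by
|\<Sum>_i h_ii|^2 / 4 = n^2 |H|^2 / 4.\<close>

lemma sum_lessThan_split_first:
  fixes f :: "nat \<Rightarrow> 'a::comm_monoid_add"
  assumes "0 < n"
  shows "(\<Sum>i<n. f i) = f 0 + (\<Sum>i\<in>{1..<n}. f i)"
  using sum.atLeast_Suc_lessThan[OF assms, of f] by (simp add: lessThan_atLeast0)

lemma inner_le_quarter_norm_add_sq:
  fixes a b :: "'v::real_inner"
  shows "a \<bullet> b \<le> (norm (a + b))\<^sup>2 / 4"
proof -
  have "0 \<le> (norm (a - b))\<^sup>2" by simp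
  then show ?thesis
    by (simp add: power2_norm_eq_inner inner_simps inner_commute algebra_simps)
qed

lemma sum_inner_first_minus_le_quarter_norm_sum_sq:
  fixes a b :: "nat \<Rightarrow> 'v::real_inner"
  assumes "0 < n"
  shows "(\<Sum>j\<in>{1..<n}. a 0 \<bullet> a j - b j \<bullet> b j) \<le> (norm (\<Sum>i<n. a i))\<^sup>2 / 4"
proof -
  have "(\<Sum>j\<in>{1..<n}. a 0 \<bullet> a j - b j \<bullet> b j) \<le> (\<Sum>j\<in>{1..<n}. a 0 \<bullet> a j)"
    by (rule sum_mono) simp
  also have "\<dots> = a 0 \<bullet> (\<Sum>j\<in>{1..<n}. a j)"
    by (simp add: inner_sum_right)
  also have "\<dots> \<le> (norm (a 0 + (\<Sum>j\<in>{1..<n}. a j)))\<^sup>2 / 4"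
    by (rule inner_le_quarter_norm_add_sq)
  finally show ?thesis
    by (simp add: sum_lessThan_split_first[OF assms])
qed

lemma inner_skew_if_isometric_complex_structure:
  fixes J :: "'v::real_inner \<Rightarrow> 'v"
  assumes "\<And>x. J (J x) = - x" and "\<And>x y. J x \<bullet> J y = x \<bullet> y"
  shows "J x \<bullet> y = - (x \<bullet> J y)"
  by (metis assms inner_minus_left)

lemma Rstar_orthonormal_inner:
  fixes \<psi> :: "nat \<Rightarrow> 'v::euclidean_space \<Rightarrow> 'v"
  assumes skew: "\<And>k x y. k \<in> {1,2,3} \<Longrightarrow> \<psi> k x \<bullet> y = - (x \<bullet> \<psi> k y)"
    and "X \<bullet> X = 1" "Y \<bullet> Y = 1" "X \<bullet> Y = 0"
  shows "Rstar c \<psi> X Y Y \<bullet> X = c * (1 + 3 * (\<Sum>k\<in>{1,2,3}. (\<psi> k X \<bullet> Y)\<^sup>2))"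
proof -
  have self: "\<psi> k Z \<bullet> Z = 0" if "k \<in> {1,2,3}" for k Z
    using skew[OF that, of Z Z] by (simp add: inner_commute)
  have swap: "\<psi> k Y \<bullet> X = - (\<psi> k X \<bullet> Y)" if "k \<in> {1,2,3}" for k
    using skew[OF that, of Y X] by (simp add: inner_commute)
  show ?thesis
    unfolding Rstar_def
    using assms(2-4) self swap
    by (simp add: inner_simps inner_sum_left inner_commute[of Y X] power2_eq_square
        algebra_simps sum_distrib_left)
qed

lemma Rpp_orthonormal_inner:
  assumes "X \<bullet> X = 1" "Y \<bullet> Y = 1" "X \<bullet> Y = 0"
  shows "Rpp c \<psi> Q e n X Y Y \<bullet> X
    = Rstar c \<psi> X Y Y \<bullet> X - tau' c \<psi> e n / real n * (Mform Q Y Y + Mform Q X X)"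
  using assms unfolding Rpp_def
  by (simp add: inner_simps inner_commute[of Y X] Mform_def algebra_simps)

lemma tau'_div:
  assumes "0 < n"
  shows "tau' c \<psi> e n / real n = c * ((real n - 1) + 3 * (\<Sum>k\<in>{1,2,3}. normP2 \<psi> e n k / real n))"
  using assms unfolding tau'_def by (simp add: field_simps sum_divide_distrib)

lemma norm_scaled_meancurv:
  assumes "0 < n"
  shows "(real n)\<^sup>2 * (norm (meancurv h e n))\<^sup>2 = (norm (\<Sum>i<n. h (e i) (e i)))\<^sup>2"
proof -
  have "real n *\<^sub>R meancurv h e n = (\<Sum>i<n. h (e i) (e i))"
    using assms unfolding meancurv_def by simp
  then show ?thesis
    by (metis norm_scaleR abs_of_nat power_mult_distrib)
qed

lemma sum_Rpp_orthonormal_frame: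
  fixes \<psi> :: "nat \<Rightarrow> 'v::euclidean_space \<Rightarrow> 'v"
  assumes skew: "\<And>k x y. k \<in> {1,2,3} \<Longrightarrow> \<psi> k x \<bullet> y = - (x \<bullet> \<psi> k y)"
    and e_on: "\<And>i j. i < n \<Longrightarrow> j < n \<Longrightarrow> e i \<bullet> e j = (if i = j then 1 else 0)"
    and "0 < n"
  shows "(\<Sum>j\<in>{1..<n}. Rpp c \<psi> Q e n (e 0) (e j) (e j) \<bullet> e 0)
    = c * ((real n - 1) + 3 * (\<Sum>k\<in>{1,2,3}. \<Sum>j\<in>{1..<n}. (\<psi> k (e 0) \<bullet> e j)\<^sup>2))
      - tau' c \<psi> e n / real n * (trM Q e n + (real n - 2) * Mform Q (e 0) (e 0))"
proof -
  let ?t = "tau' c \<psi> e n / real n"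
  have "Rpp c \<psi> Q e n (e 0) (e j) (e j) \<bullet> e 0
      = c * (1 + 3 * (\<Sum>k\<in>{1,2,3}. (\<psi> k (e 0) \<bullet> e j)\<^sup>2))
        - ?t * (Mform Q (e j) (e j) + Mform Q (e 0) (e 0))"
    if "j \<in> {1..<n}" for j
  proof -
    have on: "e 0 \<bullet> e 0 = 1" "e j \<bullet> e j = 1" "e 0 \<bullet> e j = 0"
      using that e_on[of 0 0] e_on[of j j] e_on[of 0 j] by auto
    have "Rstar c \<psi> (e 0) (e j) (e j) \<bullet> e 0 = c * (1 + 3 * (\<Sum>k\<in>{1,2,3}. (\<psi> k (e 0) \<bullet> e j)\<^sup>2))"
      using skew on by (rule Rstar_orthonormal_inner)
    then show ?thesis
      by (simp add: Rpp_orthonormal_inner[OF on])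
  qed
  then have "(\<Sum>j\<in>{1..<n}. Rpp c \<psi> Q e n (e 0) (e j) (e j) \<bullet> e 0)
      = (\<Sum>j\<in>{1..<n}. c * (1 + 3 * (\<Sum>k\<in>{1,2,3}. (\<psi> k (e 0) \<bullet> e j)\<^sup>2)))
        - ?t * (\<Sum>j\<in>{1..<n}. Mform Q (e j) (e j) + Mform Q (e 0) (e 0))"
    unfolding sum_distrib_left sum_subtractf[symmetric] by (rule sum.cong[OF refl])
  also have "(\<Sum>j\<in>{1..<n}. c * (1 + 3 * (\<Sum>k\<in>{1,2,3}. (\<psi> k (e 0) \<bullet> e j)\<^sup>2)))
      = c * ((real n - 1) + 3 * (\<Sum>k\<in>{1,2,3}. \<Sum>j\<in>{1..<n}. (\<psi> k (e 0) \<bullet> e j)\<^sup>2))"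
    using \<open>0 < n\<close>
    by (simp add: sum.distrib sum_distrib_left[symmetric] sum.swap[of _ "{1..<n}"] of_nat_diff)
  also have "(\<Sum>j\<in>{1..<n}. Mform Q (e j) (e j) + Mform Q (e 0) (e 0))
      = trM Q e n + (real n - 2) * Mform Q (e 0) (e 0)"
    using \<open>0 < n\<close> unfolding trM_def sum_lessThan_split_first[OF \<open>0 < n\<close>]
    by (simp add: sum.distrib of_nat_diff algebra_simps)
  finally show ?thesis .
qed

lemma Ric_eq_sum_Gauss:
  assumes e_in: "\<And>i. i < n \<Longrightarrow> e i \<in> T"
    and h_sym: "\<And>X Y. X \<in> T \<Longrightarrow> Y \<in> T \<Longrightarrow> h X Y = h Y X"
    and gauss: "\<And>X Y Z W. X \<in> T \<Longrightarrow> Y \<in> T \<Longrightarrow> Z \<in> T \<Longrightarrow> W \<in> T \<Longrightarrow>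
        R' X Y Z \<bullet> W = R X Y Z \<bullet> W + h X Z \<bullet> h Y W - h X W \<bullet> h Y Z"
  shows "Ric R e n = (\<Sum>j\<in>{1..<n}. R' (e 0) (e j) (e j) \<bullet> e 0)
    + (\<Sum>j\<in>{1..<n}. h (e 0) (e 0) \<bullet> h (e j) (e j) - h (e 0) (e j) \<bullet> h (e 0) (e j))"
proof -
  have "R (e 0) (e j) (e j) \<bullet> e 0 = R' (e 0) (e j) (e j) \<bullet> e 0
      + (h (e 0) (e 0) \<bullet> h (e j) (e j) - h (e 0) (e j) \<bullet> h (e 0) (e j))"
    if "j \<in> {1..<n}" for j
  proof -
    have "e 0 \<in> T" "e j \<in> T" using that e_in by auto
    then show ?thesis using gauss h_sym[of "e j" "e 0"] by simp
  qed
  then show ?thesis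
    unfolding Ric_def sum.distrib[symmetric] by (rule sum.cong[OF refl])
qed

theorem theorem2:
  fixes \<psi> :: "nat \<Rightarrow> 'v::euclidean_space \<Rightarrow> 'v"
    and c :: real and m n :: nat
    and Q :: "'v \<Rightarrow> 'v"
    and T :: "'v set"
    and e :: "nat \<Rightarrow> 'v"
    and h :: "'v \<Rightarrow> 'v \<Rightarrow> 'v"
    and R :: "'v \<Rightarrow> 'v \<Rightarrow> 'v \<Rightarrow> 'v"
  assumes dimM: "DIM('v) = 4 * m"
    and psi_lin: "\<And>k. k \<in> {1,2,3} \<Longrightarrow> linear (\<psi> k)"
    and psi_sq: "\<And>k X. k \<in> {1,2,3} \<Longrightarrow> \<psi> k (\<psi> k X) = - X"
    and psi_herm: "\<And>k X Y. k \<in> {1,2,3} \<Longrightarrow> \<psi> k X \<bullet> \<psi> k Y = X \<bullet> Y"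
    and psi12: "\<And>X. \<psi> 1 (\<psi> 2 X) = \<psi> 3 X" "\<And>X. \<psi> 2 (\<psi> 1 X) = - \<psi> 3 X"
    and psi23: "\<And>X. \<psi> 2 (\<psi> 3 X) = \<psi> 1 X" "\<And>X. \<psi> 3 (\<psi> 2 X) = - \<psi> 1 X"
    and psi31: "\<And>X. \<psi> 3 (\<psi> 1 X) = \<psi> 2 X" "\<And>X. \<psi> 1 (\<psi> 3 X) = - \<psi> 2 X"
    and Q_lin: "linear Q"
    and T_sub: "subspace T"
    and dimT: "dim T = n"
    and n_pos: "n \<ge> 1"
    and e_in: "\<And>i. i < n \<Longrightarrow> e i \<in> T"
    and e_on: "\<And>i j. i < n \<Longrightarrow> j < n \<Longrightarrow> e i \<bullet> e j = (if i = j then 1 else 0)"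
    and h_bil: "bilinear h"
    and h_sym: "\<And>X Y. X \<in> T \<Longrightarrow> Y \<in> T \<Longrightarrow> h X Y = h Y X"
    and h_normal: "\<And>X Y Z. X \<in> T \<Longrightarrow> Y \<in> T \<Longrightarrow> Z \<in> T \<Longrightarrow> h X Y \<bullet> Z = 0"
    and R_tan: "\<And>X Y Z. X \<in> T \<Longrightarrow> Y \<in> T \<Longrightarrow> Z \<in> T \<Longrightarrow> R X Y Z \<in> T"
    and gauss: "\<And>X Y Z W. X \<in> T \<Longrightarrow> Y \<in> T \<Longrightarrow> Z \<in> T \<Longrightarrow> W \<in> T \<Longrightarrow>
        Rpp c \<psi> Q e n X Y Z \<bullet> W = R X Y Z \<bullet> W + h X Z \<bullet> h Y W - h X W \<bullet> h Y Z"
  shows "Ric R e n \<le>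
      c * ((real n - 1) + 3 * (\<Sum>k\<in>{1,2,3}. \<Sum>j\<in>{1..<n}. (\<psi> k (e 0) \<bullet> e j)\<^sup>2))
      - c * ((real n - 1) + 3 * (\<Sum>k\<in>{1,2,3}. normP2 \<psi> e n k / real n))
          * (trM Q e n + (real n - 2) * Mform Q (e 0) (e 0))
      + (real n)\<^sup>2 * (norm (meancurv h e n))\<^sup>2 / 4"
proof -
  have n: "0 < n" using n_pos by simp
  have skew: "\<psi> k x \<bullet> y = - (x \<bullet> \<psi> k y)" if "k \<in> {1,2,3}" for k x y
    using inner_skew_if_isometric_complex_structure psi_sq[OF that] psi_herm[OF that] by blast
  have "(\<Sum>j\<in>{1..<n}. h (e 0) (e 0) \<bullet> h (e j) (e j) - h (e 0) (e j) \<bullet> h (e 0) (e j))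
      \<le> (real n)\<^sup>2 * (norm (meancurv h e n))\<^sup>2 / 4"
    using sum_inner_first_minus_le_quarter_norm_sum_sq[OF n, of "\<lambda>i. h (e i) (e i)"]
    unfolding norm_scaled_meancurv[OF n] by simp
  moreover have "Ric R e n = (\<Sum>j\<in>{1..<n}. Rpp c \<psi> Q e n (e 0) (e j) (e j) \<bullet> e 0)
      + (\<Sum>j\<in>{1..<n}. h (e 0) (e 0) \<bullet> h (e j) (e j) - h (e 0) (e j) \<bullet> h (e 0) (e j))"
    using e_in h_sym gauss by (rule Ric_eq_sum_Gauss)
  moreover have "(\<Sum>j\<in>{1..<n}. Rpp c \<psi> Q e n (e 0) (e j) (e j) \<bullet> e 0)
      = c * ((real n - 1) + 3 * (\<Sum>k\<in>{1,2,3}. \<Sum>j\<in>{1..<n}. (\<psi> k (e 0) \<bullet> e j)\<^sup>2))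
        - tau' c \<psi> e n / real n * (trM Q e n + (real n - 2) * Mform Q (e 0) (e 0))"
    using skew e_on n by (rule sum_Rpp_orthonormal_frame)
  ultimately show ?thesis
    unfolding tau'_div[OF n] by linarith
qed

end
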